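(* Let $\mathcal{N}$ be a Beeping Network with $n$ nodes and maximum degree $\Delta$, where each node has a unique ID from $[1,n^c]$ for a constant $c\ge1$ and each node knows $n$, $c$ and $\Delta$. Then the Maximal Independent Set problem can be solved deterministically on $\mathcal{N}$ in $O(\Delta^2\,\mathrm{polylog}\, n)$ beeping rounds.
   Context: A Beeping Network is a network of $n$ nodes whose topology is an undirected graph $G=(V,E)$. Time is divided into synchronous rounds and all nodes start simultaneously. In each round every node either beeps or listens; a listening node hears "silence" if no neighbor beeps and "noise" if at least one neighbor beeps, and cannot distinguish one beep from several. An independent set is $S\subseteq V$ with no edge between any two of its nodes; it is maximal if it is not contained in a larger independent set. The Maximal Independent Set problem is solved when, for some maximal independent set $S$, every node of $S$ knows that it is in $S$. *)

theory Defs
  imports Complex_Main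
begin

definition simple_graph :: "'v set \<Rightarrow> ('v \<Rightarrow> 'v \<Rightarrow> bool) \<Rightarrow> bool" where
  "simple_graph V E \<longleftrightarrow> finite V \<and> (\<forall>u v. E u v \<longrightarrow> u \<in> V \<and> v \<in> V)
     \<and> (\<forall>u v. E u v \<longrightarrow> E v u) \<and> (\<forall>v. \<not> E v v)"

definition degree :: "'v set \<Rightarrow> ('v \<Rightarrow> 'v \<Rightarrow> bool) \<Rightarrow> 'v \<Rightarrow> nat" where
  "degree V E v = card {u \<in> V. E v u}"

definition max_degree :: "'v set \<Rightarrow> ('v \<Rightarrow> 'v \<Rightarrow> bool) \<Rightarrow> nat" where
  "max_degree V E = Max (degree V E ` V)"

definition independent_set :: "'v set \<Rightarrow> ('v \<Rightarrow> 'v \<Rightarrow> bool) \<Rightarrow> 'v set \<Rightarrow> bool" where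
  "independent_set V E S \<longleftrightarrow> S \<subseteq> V \<and> (\<forall>u\<in>S. \<forall>v\<in>S. \<not> E u v)"

definition maximal_independent_set :: "'v set \<Rightarrow> ('v \<Rightarrow> 'v \<Rightarrow> bool) \<Rightarrow> 'v set \<Rightarrow> bool" where
  "maximal_independent_set V E S \<longleftrightarrow> independent_set V E S \<and>
     (\<forall>S'. independent_set V E S' \<and> S \<subseteq> S' \<longrightarrow> S' = S)"

text \<open>A deterministic beeping algorithm: in each round, a node decides whether to beep
  as a function of its ID, the known parameters n, c, \<Delta> and its own history of
  observations so far (one boolean per past round: True = heard noise while listening;
  a beeping node records False, it hears nothing). Parameters are passed as
  ID, n, c, \<Delta>, history.\<close>
type_synonym beep_alg = "nat \<Rightarrow> nat \<Rightarrow> nat \<Rightarrow> nat \<Rightarrow> bool list \<Rightarrow> bool"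

text \<open>Histories of all nodes after t synchronous rounds (all nodes start simultaneously).\<close>
fun histories :: "beep_alg \<Rightarrow> ('v \<Rightarrow> 'v \<Rightarrow> bool) \<Rightarrow> ('v \<Rightarrow> nat) \<Rightarrow> nat \<Rightarrow> nat \<Rightarrow> nat
    \<Rightarrow> nat \<Rightarrow> 'v \<Rightarrow> bool list" where
  "histories A E ident n c \<Delta> 0 = (\<lambda>v. [])"
| "histories A E ident n c \<Delta> (Suc t) =
     (let h = histories A E ident n c \<Delta> t;
          beeps = (\<lambda>u. A (ident u) n c \<Delta> (h u))
      in (\<lambda>v. h v @ [\<not> beeps v \<and> (\<exists>u. E v u \<and> beeps u)]))"

definition solves_MIS_in ::
  "beep_alg \<Rightarrow> (nat \<Rightarrow> nat \<Rightarrow> nat \<Rightarrow> nat \<Rightarrow> bool list \<Rightarrow> bool) \<Rightarrow> nat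
     \<Rightarrow> 'v set \<Rightarrow> ('v \<Rightarrow> 'v \<Rightarrow> bool) \<Rightarrow> ('v \<Rightarrow> nat) \<Rightarrow> nat \<Rightarrow> nat \<Rightarrow> nat \<Rightarrow> bool" where
  "solves_MIS_in A out T V E ident n c \<Delta> \<longleftrightarrow>
     maximal_independent_set V E
       {v \<in> V. out (ident v) n c \<Delta> (histories A E ident n c \<Delta> T v)}"

end

theory Submission
  imports Defs "HOL-Library.FuncSet" "HOL-Library.Discrete_Functions"
begin

text \<open>
  Read IDs as \<open>j\<close>-bit numbers, \<open>2^j > n^c\<close>, and give each ID a codeword of length
  \<open>L = (\<Delta> + 1) j\<close> over an alphabet of size \<open>q = 2 L\<close> such that distinct codewords agree in
  fewer than \<open>j\<close> positions; counting the words that agree with a given one in \<open>j\<close> positions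
  shows that such a code exists. The algorithm has one phase of \<open>2 j + 1\<close> rounds for each
  position \<open>i < L\<close> and letter \<open>a < q\<close>. The candidates of the phase are the undecided nodes
  whose codeword has letter \<open>a\<close> at position \<open>i\<close>: they send their ID bit by bit, beeping on
  each bit and then on its complement, and join the MIS if they hear nothing; in the last round
  all MIS nodes beep, and every node hearing them is eliminated.

  Two adjacent candidates have distinct IDs, so one of them hears the other: the joined nodes
  are independent. An undecided node has at most \<open>\<Delta>\<close> neighbours, each agreeing with its
  codeword in at most \<open>j - 1\<close> positions; as \<open>\<Delta> (j - 1) < L\<close>, at some position no neighbour
  competes with it and it joins: the set is maximal. There are \<open>L q (2 j + 1) = O(\<Delta>^2 log^3 n)\<close>
  rounds.
\<close>

section \<open>Codes with few agreements\<close>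

definition agreements :: "nat \<Rightarrow> (nat \<Rightarrow> 'a) \<Rightarrow> (nat \<Rightarrow> 'a) \<Rightarrow> nat set" where
  "agreements L w w' = {i. i < L \<and> w i = w' i}"

lemma agreements_commute: "agreements L w w' = agreements L w' w"
  unfolding agreements_def by auto

lemma card_words_with_many_agreements_le:
  fixes w0 :: "nat \<Rightarrow> nat"
  assumes "j \<le> L"
  shows "card {w \<in> {..<L} \<rightarrow>\<^sub>E {..<q}. j \<le> card (agreements L w w0)} \<le> L ^ j * q ^ (L - j)"
proof -
  let ?subsets = "{S. S \<subseteq> {..<L} \<and> card S = j}"
  let ?cylinder = "\<lambda>S. PiE {..<L} (\<lambda>i. if i \<in> S then {w0 i} else {..<q})"
  have cover: "{w \<in> {..<L} \<rightarrow>\<^sub>E {..<q}. j \<le> card (agreements L w w0)} \<subseteq> (\<Union>S\<in>?subsets. ?cylinder S)"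
  proof
    fix w assume "w \<in> {w \<in> {..<L} \<rightarrow>\<^sub>E {..<q}. j \<le> card (agreements L w w0)}"
    then have w: "w \<in> {..<L} \<rightarrow>\<^sub>E {..<q}" and "j \<le> card (agreements L w w0)" by auto
    then obtain S where S: "S \<subseteq> agreements L w w0" "card S = j"
      by (meson obtain_subset_with_card_n)
    then have "w \<in> ?cylinder S" "S \<in> ?subsets"
      using w by (auto simp: PiE_iff agreements_def)
    then show "w \<in> (\<Union>S\<in>?subsets. ?cylinder S)" by blast
  qed
  have card_cylinder: "card (?cylinder S) = q ^ (L - j)" if "S \<in> ?subsets" for S
  proof -
    have "card (?cylinder S) = (\<Prod>i<L. if i \<in> S then 1 else q)"
      by (simp add: card_PiE if_distrib cong: if_cong)
    also have "\<dots> = q ^ card ({..<L} - S)"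
      by (simp add: prod.If_cases Diff_eq)
    also have "card ({..<L} - S) = L - j"
      using that finite_subset[of S "{..<L}"] by (simp add: card_Diff_subset)
    finally show ?thesis .
  qed
  have finite_subsets: "finite ?subsets" by (rule finite_subset[of _ "Pow {..<L}"]) auto
  have "card {w \<in> {..<L} \<rightarrow>\<^sub>E {..<q}. j \<le> card (agreements L w w0)} \<le> card (\<Union>S\<in>?subsets. ?cylinder S)"
    using finite_subsets by (intro card_mono[OF _ cover]) (simp add: finite_PiE)
  also have "\<dots> \<le> (\<Sum>S\<in>?subsets. card (?cylinder S))" by (rule card_UN_le[OF finite_subsets])
  also have "\<dots> = (L choose j) * q ^ (L - j)" using card_cylinder by (simp add: n_subsets)
  also have "\<dots> \<le> L ^ j * q ^ (L - j)" by (simp add: binomial_le_pow assms)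
  finally show ?thesis .
qed

lemma exists_word_with_few_agreements:
  fixes N :: nat
  assumes "0 < j" "j \<le> L" "2 * L \<le> q" "N < 2 ^ j"
  shows "\<exists>w. (\<forall>i<L. w i < q) \<and> (\<forall>x<N. card (agreements L w (cw x)) < j)"
proof -
  let ?words = "{..<L} \<rightarrow>\<^sub>E {..<q}"
  let ?bad = "\<lambda>x. {w \<in> ?words. j \<le> card (agreements L w (cw x))}"
  have "0 < L" "0 < q" using assms by linarith+
  have finite_words: "finite ?words" by (simp add: finite_PiE)
  have "card (\<Union>x<N. ?bad x) \<le> (\<Sum>x<N. card (?bad x))" by (rule card_UN_le) simp
  also have "\<dots> \<le> (\<Sum>x<N. L ^ j * q ^ (L - j))"
    by (intro sum_mono card_words_with_many_agreements_le assms(2))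
  also have "\<dots> = N * (L ^ j * q ^ (L - j))" by simp
  also have "\<dots> < 2 ^ j * (L ^ j * q ^ (L - j))"
    using assms(4) \<open>0 < L\<close> \<open>0 < q\<close> by (intro mult_strict_right_mono) simp_all
  also have "\<dots> = (2 * L) ^ j * q ^ (L - j)" by (simp add: power_mult_distrib)
  also have "\<dots> \<le> q ^ j * q ^ (L - j)"
    using assms(3) by (intro mult_right_mono power_mono) simp_all
  also have "\<dots> = card ?words"
    using assms(2) by (simp add: card_PiE flip: power_add)
  finally have fewer_bad: "card (\<Union>x<N. ?bad x) < card ?words" .
  have "finite (\<Union>x<N. ?bad x)" using finite_words by auto
  then obtain w where "w \<in> ?words" "w \<notin> (\<Union>x<N. ?bad x)"
    using fewer_bad card_mono by (meson not_le subsetI)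
  then show ?thesis by (intro exI[of _ w]) (auto simp: PiE_iff not_le)
qed

definition low_agreement_code :: "nat \<Rightarrow> nat \<Rightarrow> nat \<Rightarrow> (nat \<Rightarrow> nat \<Rightarrow> nat) \<Rightarrow> bool" where
  "low_agreement_code j L q cw \<longleftrightarrow> (\<forall>x. \<forall>i<L. cw x i < q) \<and>
     (\<forall>x<2^j. \<forall>y<2^j. x \<noteq> y \<longrightarrow> card (agreements L (cw x) (cw y)) < j)"

lemma low_agreement_code_exists:
  assumes "0 < j" "j \<le> L" "2 * L \<le> q"
  shows "\<exists>cw. low_agreement_code j L q cw"
proof -
  have "\<exists>cw. (\<forall>x. \<forall>i<L. cw x i < q) \<and>
      (\<forall>x<N. \<forall>y<N. x \<noteq> y \<longrightarrow> card (agreements L (cw x) (cw y)) < j)" if "N \<le> 2 ^ j" for N :: nat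
    using that
  proof (induction N)
    case 0
    show ?case using assms by (intro exI[of _ "\<lambda>_ _. 0"]) auto
  next
    case (Suc N)
    then obtain cw where cw: "\<forall>x. \<forall>i<L. cw x i < q"
      "\<forall>x<N. \<forall>y<N. x \<noteq> y \<longrightarrow> card (agreements L (cw x) (cw y)) < j" by auto
    obtain w where w: "\<forall>i<L. w i < q" "\<forall>x<N. card (agreements L w (cw x)) < j"
      using exists_word_with_few_agreements[OF assms, of N cw] Suc.prems by auto
    have "\<forall>x<Suc N. \<forall>y<Suc N. x \<noteq> y \<longrightarrow> card (agreements L ((cw(N := w)) x) ((cw(N := w)) y)) < j"
    proof (intro allI impI)
      fix x y assume "x < Suc N" "y < Suc N" "x \<noteq> y"
      then consider "x < N" "y < N" | "x = N" "y < N" | "x < N" "y = N" by linarith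
      then show "card (agreements L ((cw(N := w)) x) ((cw(N := w)) y)) < j"
        by cases (use cw(2) w(2) \<open>x \<noteq> y\<close> in \<open>auto simp: agreements_commute[of L w]\<close>)
    qed
    then show ?case using cw(1) w(1) by (intro exI[of _ "cw(N := w)"]) auto
  qed
  from this[OF order_refl] show ?thesis unfolding low_agreement_code_def by blast
qed

section \<open>The algorithm at a single node\<close>

text \<open>
  Below, \<open>x\<close> is the ID of the node and \<open>heard t\<close> says whether it heard noise in round \<open>t\<close>.
  Round \<open>t\<close> lies in phase \<open>s = t div (2 j + 1)\<close>, which is reserved for the codewords
  with letter \<open>s mod q\<close> at position \<open>s div q\<close>. In rounds \<open>2 b\<close> and \<open>2 b + 1\<close> of its phase a
  candidate beeps iff bit \<open>b\<close> of its ID is set resp. unset; in the last round of every phase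
  all joined nodes beep.
\<close>

definition phase_length :: "nat \<Rightarrow> nat" where
  "phase_length j = Suc (2 * j)"

lemma less_phase_length_iff [simp]: "k < phase_length j \<longleftrightarrow> k \<le> 2 * j"
  unfolding phase_length_def by (rule less_Suc_eq_le)

lemma phase_length_pos [simp]: "0 < phase_length j"
  unfolding phase_length_def by simp

lemma phase_div_mod:
  assumes "k \<le> 2 * j"
  shows "(s * phase_length j + k) div phase_length j = s" "(s * phase_length j + k) mod phase_length j = k"
  using assms by simp_all

definition eliminated :: "nat \<Rightarrow> (nat \<Rightarrow> bool) \<Rightarrow> nat \<Rightarrow> bool" where
  "eliminated j heard t \<longleftrightarrow> (\<exists>t'<t. t' mod phase_length j = 2 * j \<and> heard t')"

fun joined :: "nat \<Rightarrow> nat \<Rightarrow> (nat \<Rightarrow> nat \<Rightarrow> nat) \<Rightarrow> nat \<Rightarrow> (nat \<Rightarrow> bool) \<Rightarrow> nat \<Rightarrow> bool" where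
  "joined j q cw x heard 0 = False"
| "joined j q cw x heard (Suc s) \<longleftrightarrow> joined j q cw x heard s \<or>
     (\<not> eliminated j heard (s * phase_length j) \<and> cw x (s div q) = s mod q \<and>
      (\<forall>k<2 * j. \<not> heard (s * phase_length j + k)))"

definition candidate :: "nat \<Rightarrow> nat \<Rightarrow> (nat \<Rightarrow> nat \<Rightarrow> nat) \<Rightarrow> nat \<Rightarrow> (nat \<Rightarrow> bool) \<Rightarrow> nat \<Rightarrow> bool" where
  "candidate j q cw x heard s \<longleftrightarrow>
     \<not> joined j q cw x heard s \<and> \<not> eliminated j heard (s * phase_length j) \<and> cw x (s div q) = s mod q"

definition beeps :: "nat \<Rightarrow> nat \<Rightarrow> (nat \<Rightarrow> nat \<Rightarrow> nat) \<Rightarrow> nat \<Rightarrow> (nat \<Rightarrow> bool) \<Rightarrow> nat \<Rightarrow> bool" where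
  "beeps j q cw x heard t =
     (let s = t div phase_length j; k = t mod phase_length j in
      if k < 2 * j then candidate j q cw x heard s \<and> bit x (k div 2) = even k
      else joined j q cw x heard (Suc s))"

lemma eliminated_cong:
  "(\<And>t'. t' < t \<Longrightarrow> f t' = g t') \<Longrightarrow> eliminated j f t = eliminated j g t"
  unfolding eliminated_def by auto

text \<open>Joining in phase \<open>s - 1\<close> is decided before the announcement round of that phase.\<close>

lemma joined_cong:
  "(\<And>t. Suc t < s * phase_length j \<Longrightarrow> f t = g t) \<Longrightarrow> joined j q cw x f s = joined j q cw x g s"
proof (induction s)
  case 0
  show ?case by simp
next
  case (Suc s)
  have "joined j q cw x f s = joined j q cw x g s"
    using Suc.prems by (intro Suc.IH) auto
  moreover have "eliminated j f (s * phase_length j) = eliminated j g (s * phase_length j)"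
    using Suc.prems by (intro eliminated_cong) (auto simp: phase_length_def)
  moreover have "(\<forall>k<2 * j. \<not> f (s * phase_length j + k)) = (\<forall>k<2 * j. \<not> g (s * phase_length j + k))"
    using Suc.prems by auto
  ultimately show ?case by simp
qed

lemma beeps_cong:
  assumes "\<And>t'. t' < t \<Longrightarrow> f t' = g t'"
  shows "beeps j q cw x f t = beeps j q cw x g t"
proof -
  define s k where "s = t div phase_length j" and "k = t mod phase_length j"
  have t: "t = s * phase_length j + k"
    unfolding s_def k_def by (rule div_mult_mod_eq[symmetric])
  have "k \<le> 2 * j"
    using mod_less_divisor[OF phase_length_pos] unfolding k_def by simp
  have "joined j q cw x f s = joined j q cw x g s"
    using assms t by (intro joined_cong) auto
  moreover have "eliminated j f (s * phase_length j) = eliminated j g (s * phase_length j)"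
    using assms t by (intro eliminated_cong) auto
  moreover have "joined j q cw x f (Suc s) = joined j q cw x g (Suc s)" if "k = 2 * j"
    using assms t that by (intro joined_cong) (auto simp: phase_length_def)
  ultimately show ?thesis
    using \<open>k \<le> 2 * j\<close> unfolding beeps_def candidate_def Let_def s_def[symmetric] k_def[symmetric]
    by auto
qed

lemma ex_bit_neq_below:
  fixes x y :: nat
  assumes "x < 2 ^ j" "y < 2 ^ j" "x \<noteq> y"
  shows "\<exists>b<j. bit x b \<noteq> bit y b"
proof -
  have "take_bit j x \<noteq> take_bit j y" using assms by (simp add: take_bit_nat_eq_self)
  then show ?thesis by (auto simp: bit_eq_iff bit_take_bit_iff)
qed

section \<open>Runs on a network\<close>

locale beeping_mis_run =
  fixes V :: "'v set" and E :: "'v \<Rightarrow> 'v \<Rightarrow> bool" and ident :: "'v \<Rightarrow> nat"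
    and A :: beep_alg and n c \<Delta> :: nat
    and j q L :: nat and cw :: "nat \<Rightarrow> nat \<Rightarrow> nat"
  assumes graph: "simple_graph V E"
    and ident_inj: "inj_on ident V"
    and ident_less: "\<And>v. v \<in> V \<Longrightarrow> ident v < 2 ^ j"
    and degree_le: "\<And>v. v \<in> V \<Longrightarrow> degree V E v \<le> \<Delta>"
    and code: "low_agreement_code j L q cw"
    and long_code: "\<Delta> * (j - 1) < L"
    and A_eq: "\<And>x h. A x n c \<Delta> h = beeps j q cw x (nth h) (length h)"
begin

abbreviation history :: "nat \<Rightarrow> 'v \<Rightarrow> bool list" where
  "history t \<equiv> histories A E ident n c \<Delta> t"

definition heard :: "nat \<Rightarrow> 'v \<Rightarrow> bool" where
  "heard t v = history (Suc t) v ! t"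

definition beeping :: "nat \<Rightarrow> 'v \<Rightarrow> bool" where
  "beeping t v = beeps j q cw (ident v) (\<lambda>t. heard t v) t"

definition has_joined :: "'v \<Rightarrow> nat \<Rightarrow> bool" where
  "has_joined v s = joined j q cw (ident v) (\<lambda>t. heard t v) s"

definition is_eliminated :: "'v \<Rightarrow> nat \<Rightarrow> bool" where
  "is_eliminated v t = eliminated j (\<lambda>t. heard t v) t"

definition is_candidate :: "'v \<Rightarrow> nat \<Rightarrow> bool" where
  "is_candidate v s = candidate j q cw (ident v) (\<lambda>t. heard t v) s"

lemma edge_sym: "E u v \<Longrightarrow> E v u"
  using graph unfolding simple_graph_def by blast

lemma edge_in_V: "E u v \<Longrightarrow> u \<in> V \<and> v \<in> V"
  using graph unfolding simple_graph_def by blast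

lemma no_loop: "\<not> E v v"
  using graph unfolding simple_graph_def by blast

lemma history_Suc:
  "history (Suc t) v =
     history t v @ [\<not> A (ident v) n c \<Delta> (history t v) \<and> (\<exists>u. E v u \<and> A (ident u) n c \<Delta> (history t u))]"
  by (simp add: Let_def)

lemma length_history [simp]: "length (history t v) = t"
  by (induction t) (simp_all add: history_Suc del: histories.simps(2))

lemma nth_history: "t' < t \<Longrightarrow> history t v ! t' = heard t' v"
proof (induction t)
  case 0
  then show ?case by simp
next
  case (Suc t)
  show ?case
  proof (cases "t' < t")
    case True
    then show ?thesis using Suc.IH by (simp add: history_Suc nth_append del: histories.simps)
  next
    case False
    then have "t' = t" using Suc.prems by simp
    then show ?thesis by (simp add: heard_def)
  qed
qed

lemma A_history_eq_beeping: "A (ident v) n c \<Delta> (history t v) = beeping t v"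
  unfolding A_eq beeping_def length_history by (rule beeps_cong) (simp add: nth_history)

lemma heard_iff: "heard t v \<longleftrightarrow> \<not> beeping t v \<and> (\<exists>u. E v u \<and> beeping t u)"
  by (simp add: heard_def history_Suc nth_append A_history_eq_beeping del: histories.simps)

lemma beeping_in_bit_round:
  "k < 2 * j \<Longrightarrow>
     beeping (s * phase_length j + k) v \<longleftrightarrow> is_candidate v s \<and> bit (ident v) (k div 2) = even k"
  unfolding beeping_def beeps_def is_candidate_def by (simp add: Let_def phase_div_mod)

lemma beeping_in_announcement_round:
  "beeping (s * phase_length j + 2 * j) v \<longleftrightarrow> has_joined v (Suc s)"
  unfolding beeping_def beeps_def has_joined_def by (simp add: Let_def phase_div_mod)

lemma has_joined_Suc_iff:
  "has_joined v (Suc s) \<longleftrightarrow>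
     has_joined v s \<or> (is_candidate v s \<and> (\<forall>k<2 * j. \<not> heard (s * phase_length j + k) v))"
  unfolding has_joined_def is_candidate_def candidate_def by auto

lemma is_candidate_iff:
  "is_candidate v s \<longleftrightarrow>
     \<not> has_joined v s \<and> \<not> is_eliminated v (s * phase_length j) \<and> cw (ident v) (s div q) = s mod q"
  unfolding has_joined_def is_candidate_def candidate_def is_eliminated_def ..

lemma has_joined_mono: "s \<le> s' \<Longrightarrow> has_joined v s \<Longrightarrow> has_joined v s'"
  by (induction s' rule: dec_induct) (auto simp: has_joined_Suc_iff)

lemma is_eliminated_mono: "t \<le> t' \<Longrightarrow> is_eliminated v t \<Longrightarrow> is_eliminated v t'"
  unfolding is_eliminated_def eliminated_def by (meson order_less_le_trans)

lemma joining_phase: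
  "has_joined v s \<Longrightarrow>
     \<exists>s'<s. is_candidate v s' \<and> (\<forall>k<2 * j. \<not> heard (s' * phase_length j + k) v)"
proof (induction s)
  case 0
  then show ?case by (simp add: has_joined_def)
next
  case (Suc s)
  then show ?case by (cases "has_joined v s") (auto simp: has_joined_Suc_iff less_Suc_eq)
qed


lemma neighbour_of_joined_eliminated:
  assumes "E v u" "has_joined u (Suc s)" "\<not> has_joined v (Suc s)"
  shows "is_eliminated v (Suc s * phase_length j)"
proof -
  have "heard (s * phase_length j + 2 * j) v"
    using assms by (auto simp: heard_iff beeping_in_announcement_round)
  moreover have "(s * phase_length j + 2 * j) mod phase_length j = 2 * j"
    by (rule phase_div_mod) simp
  ultimately show ?thesis
    unfolding is_eliminated_def eliminated_def by (intro exI[of _ "s * phase_length j + 2 * j"]) simp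
qed

lemma candidate_hears_adjacent_candidate:
  assumes "E u v" "is_candidate u s" "is_candidate v s"
  shows "\<exists>k<2 * j. heard (s * phase_length j + k) v"
proof -
  have "u \<in> V" "v \<in> V" "u \<noteq> v" using assms(1) edge_in_V no_loop by auto
  then have "ident u \<noteq> ident v" using ident_inj by (auto dest: inj_onD)
  then obtain b where "b < j" and b: "bit (ident u) b \<noteq> bit (ident v) b"
    using ex_bit_neq_below ident_less \<open>u \<in> V\<close> \<open>v \<in> V\<close> by blast
  \<comment> \<open>the round of bit \<open>b\<close> in which \<open>u\<close> beeps and \<open>v\<close> listens\<close>
  define k where "k = 2 * b + (if bit (ident u) b then 0 else 1)"
  have "k < 2 * j" "bit (ident u) (k div 2) = even k" "bit (ident v) (k div 2) \<noteq> even k"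
    using \<open>b < j\<close> b unfolding k_def by auto
  then have "beeping (s * phase_length j + k) u" "\<not> beeping (s * phase_length j + k) v"
    using assms(2) beeping_in_bit_round by auto
  then show ?thesis
    using \<open>k < 2 * j\<close> edge_sym[OF assms(1)] heard_iff by blast
qed

lemma not_candidate_after_neighbour_joined:
  assumes "E u v" "has_joined u (Suc s)" "s < s'"
  shows "\<not> is_candidate v s'"
proof
  assume "is_candidate v s'"
  then have "\<not> has_joined v (Suc s)"
    using assms(3) has_joined_mono is_candidate_iff by (meson Suc_leI)
  then have "is_eliminated v (Suc s * phase_length j)"
    using neighbour_of_joined_eliminated edge_sym assms(1,2) by blast
  moreover have "Suc s * phase_length j \<le> s' * phase_length j"
    using assms(3) by (intro mult_le_mono1) simp
  ultimately show False
    using \<open>is_candidate v s'\<close> is_eliminated_mono is_candidate_iff by blast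
qed

lemma joined_independent:
  assumes "E u v" "has_joined u s" "has_joined v s"
  shows False
proof -
  obtain su where su: "is_candidate u su" "\<forall>k<2 * j. \<not> heard (su * phase_length j + k) u"
    using joining_phase assms(2) by blast
  obtain sv where sv: "is_candidate v sv" "\<forall>k<2 * j. \<not> heard (sv * phase_length j + k) v"
    using joining_phase assms(3) by blast
  have "has_joined u (Suc su)" "has_joined v (Suc sv)"
    using su sv has_joined_Suc_iff by blast+
  then consider "su < sv" | "sv < su" | "su = sv" by linarith
  then show False
  proof cases
    case 1
    then show False
      using not_candidate_after_neighbour_joined assms(1) \<open>has_joined u (Suc su)\<close> sv(1) by blast
  next
    case 2
    then show False
      using not_candidate_after_neighbour_joined edge_sym[OF assms(1)] \<open>has_joined v (Suc sv)\<close> su(1)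
      by blast
  next
    case 3
    then show False using candidate_hears_adjacent_candidate[OF assms(1) su(1)] sv by blast
  qed
qed

lemma free_code_position:
  assumes "v \<in> V"
  shows "\<exists>i<L. \<forall>u. E v u \<longrightarrow> cw (ident u) i \<noteq> cw (ident v) i"
proof -
  let ?neighbours = "{u \<in> V. E v u}"
  have "finite V" using graph unfolding simple_graph_def by blast
  have few_agreements: "card (agreements L (cw (ident v)) (cw (ident u))) \<le> j - 1" if "u \<in> ?neighbours" for u
  proof -
    have "ident v \<noteq> ident u" using that assms ident_inj no_loop by (auto dest: inj_onD)
    moreover have "ident v < 2 ^ j" "ident u < 2 ^ j" using ident_less assms that by auto
    ultimately have "card (agreements L (cw (ident v)) (cw (ident u))) < j"
      using code unfolding low_agreement_code_def by blast
    then show ?thesis by simp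
  qed
  have "card (\<Union>u\<in>?neighbours. agreements L (cw (ident v)) (cw (ident u)))
      \<le> (\<Sum>u\<in>?neighbours. card (agreements L (cw (ident v)) (cw (ident u))))"
    using \<open>finite V\<close> by (intro card_UN_le) simp
  also have "\<dots> \<le> (\<Sum>u\<in>?neighbours. j - 1)"
    using few_agreements by (rule sum_mono)
  also have "\<dots> = degree V E v * (j - 1)"
    by (simp add: degree_def)
  also have "\<dots> \<le> \<Delta> * (j - 1)" using degree_le[OF assms] by (rule mult_le_mono1)
  also have "\<dots> < card {..<L}" using long_code by simp
  finally have fewer_agreements:
    "card (\<Union>u\<in>?neighbours. agreements L (cw (ident v)) (cw (ident u))) < card {..<L}" .
  have "finite (\<Union>u\<in>?neighbours. agreements L (cw (ident v)) (cw (ident u)))"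
    using \<open>finite V\<close> by (simp add: agreements_def)
  then obtain i where "i < L" "i \<notin> (\<Union>u\<in>?neighbours. agreements L (cw (ident v)) (cw (ident u)))"
    using fewer_agreements card_mono by (meson lessThan_iff not_le subsetI)
  then show ?thesis using edge_in_V by (intro exI[of _ i]) (auto simp: agreements_def)
qed

lemma joins_without_adjacent_candidate:
  assumes "is_candidate v s" "\<And>u. E v u \<Longrightarrow> \<not> is_candidate u s"
  shows "has_joined v (Suc s)"
proof -
  have "\<not> heard (s * phase_length j + k) v" if "k < 2 * j" for k
    using assms(2) that by (auto simp: heard_iff beeping_in_bit_round)
  then show ?thesis using assms(1) has_joined_Suc_iff by blast
qed

lemma undecided_has_joined_neighbour:
  assumes "v \<in> V" "\<not> has_joined v (L * q)"
  shows "\<exists>u. E v u \<and> has_joined u (L * q)"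
proof (cases "is_eliminated v (L * q * phase_length j)")
  case True
  then obtain t where t: "t < L * q * phase_length j" "t mod phase_length j = 2 * j" "heard t v"
    unfolding is_eliminated_def eliminated_def by blast
  define s where "s = t div phase_length j"
  have "t = s * phase_length j + 2 * j"
    using t(2) unfolding s_def by (metis div_mult_mod_eq)
  moreover obtain u where "E v u" "beeping t u" using t(3) heard_iff by blast
  ultimately have "has_joined u (Suc s)" using beeping_in_announcement_round by simp
  moreover have "Suc s \<le> L * q" using t(1) unfolding s_def by (simp add: less_mult_imp_div_less Suc_leI)
  ultimately show ?thesis using \<open>E v u\<close> has_joined_mono by blast
next
  case False
  obtain i where "i < L" and free: "\<forall>u. E v u \<longrightarrow> cw (ident u) i \<noteq> cw (ident v) i"
    using free_code_position assms(1) by blast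
  have "cw (ident v) i < q" using code \<open>i < L\<close> unfolding low_agreement_code_def by blast
  define s where "s = i * q + cw (ident v) i"
  have s_div: "s div q = i" and s_mod: "s mod q = cw (ident v) i"
    unfolding s_def using \<open>cw (ident v) i < q\<close> by simp_all
  have "s < L * q"
  proof -
    have "s < Suc i * q" unfolding s_def using \<open>cw (ident v) i < q\<close> by simp
    also have "\<dots> \<le> L * q" using \<open>i < L\<close> by (intro mult_le_mono1) simp
    finally show ?thesis .
  qed
  then have "s \<le> L * q" by simp
  then have "\<not> has_joined v s" "\<not> is_eliminated v (s * phase_length j)"
    using assms(2) False has_joined_mono is_eliminated_mono mult_le_mono1 by blast+
  then have "is_candidate v s" using is_candidate_iff s_div s_mod by simp
  moreover have "\<not> is_candidate u s" if "E v u" for u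
    using free that is_candidate_iff s_div s_mod by auto
  ultimately have "has_joined v (Suc s)" by (rule joins_without_adjacent_candidate)
  then show ?thesis using assms(2) has_joined_mono \<open>s < L * q\<close> by (meson Suc_leI)
qed

lemma maximal_independent_set_joined:
  "maximal_independent_set V E {v \<in> V. has_joined v (L * q)}"
  unfolding maximal_independent_set_def
proof (intro conjI allI impI)
  show "independent_set V E {v \<in> V. has_joined v (L * q)}"
    unfolding independent_set_def using joined_independent by blast
  fix S assume S: "independent_set V E S \<and> {v \<in> V. has_joined v (L * q)} \<subseteq> S"
  have "v \<in> V \<and> has_joined v (L * q)" if "v \<in> S" for v
  proof -
    have "v \<in> V" using S that unfolding independent_set_def by blast
    moreover have "has_joined v (L * q)"
    proof (rule ccontr)
      assume "\<not> has_joined v (L * q)"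
      then obtain u where "E v u" "has_joined u (L * q)"
        using undecided_has_joined_neighbour \<open>v \<in> V\<close> by blast
      then show False using S that edge_in_V unfolding independent_set_def by blast
    qed
    ultimately show ?thesis ..
  qed
  then show "S = {v \<in> V. has_joined v (L * q)}" using S by blast
qed

lemma solves_MIS:
  assumes "\<And>x h. out x n c \<Delta> h = joined j q cw x (nth h) (L * q)"
  shows "solves_MIS_in A out (L * q * phase_length j) V E ident n c \<Delta>"
proof -
  have "out (ident v) n c \<Delta> (history (L * q * phase_length j) v) = has_joined v (L * q)" for v
    unfolding assms has_joined_def by (rule joined_cong) (simp add: nth_history)
  then show ?thesis
    unfolding solves_MIS_in_def using maximal_independent_set_joined by simp
qed

end

section \<open>Parameters and running time\<close>

definition mis_id_bits :: "nat \<Rightarrow> nat \<Rightarrow> nat" where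
  "mis_id_bits c n = c * Suc (floor_log n)"

definition mis_code_length :: "nat \<Rightarrow> nat \<Rightarrow> nat \<Rightarrow> nat" where
  "mis_code_length c n \<Delta> = Suc \<Delta> * mis_id_bits c n"

definition mis_code :: "nat \<Rightarrow> nat \<Rightarrow> nat \<Rightarrow> nat \<Rightarrow> nat \<Rightarrow> nat" where
  "mis_code c n \<Delta> = (SOME cw. low_agreement_code (mis_id_bits c n) (mis_code_length c n \<Delta>)
     (2 * mis_code_length c n \<Delta>) cw)"

definition mis_beep :: beep_alg where
  "mis_beep x n c \<Delta> h =
     beeps (mis_id_bits c n) (2 * mis_code_length c n \<Delta>) (mis_code c n \<Delta>) x (nth h) (length h)"

definition mis_output :: "nat \<Rightarrow> nat \<Rightarrow> nat \<Rightarrow> nat \<Rightarrow> bool list \<Rightarrow> bool" where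
  "mis_output x n c \<Delta> h =
     joined (mis_id_bits c n) (2 * mis_code_length c n \<Delta>) (mis_code c n \<Delta>) x (nth h)
       (mis_code_length c n \<Delta> * (2 * mis_code_length c n \<Delta>))"

definition mis_rounds :: "nat \<Rightarrow> nat \<Rightarrow> nat \<Rightarrow> nat" where
  "mis_rounds c n \<Delta> =
     mis_code_length c n \<Delta> * (2 * mis_code_length c n \<Delta>) * phase_length (mis_id_bits c n)"

lemma mis_id_bits_pos: "0 < c \<Longrightarrow> 0 < mis_id_bits c n"
  unfolding mis_id_bits_def by simp

lemma low_agreement_mis_code:
  assumes "0 < c"
  shows "low_agreement_code (mis_id_bits c n) (mis_code_length c n \<Delta>) (2 * mis_code_length c n \<Delta>)
           (mis_code c n \<Delta>)"
proof -
  have "\<exists>cw. low_agreement_code (mis_id_bits c n) (mis_code_length c n \<Delta>) (2 * mis_code_length c n \<Delta>) cw"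
    by (rule low_agreement_code_exists) (simp_all add: mis_id_bits_pos[OF assms] mis_code_length_def)
  then show ?thesis unfolding mis_code_def by (rule someI_ex)
qed

lemma less_two_power_mis_id_bits:
  assumes "0 < c" "x \<le> n ^ c"
  shows "x < 2 ^ mis_id_bits c n"
proof -
  have "n < 2 ^ Suc (floor_log n)" using floor_log_exp2_gt by simp
  then have "n ^ c < (2 ^ Suc (floor_log n)) ^ c" using assms(1) by (intro power_strict_mono) auto
  also have "(2 ^ Suc (floor_log n)) ^ c = (2::nat) ^ mis_id_bits c n"
    by (simp only: mis_id_bits_def mult.commute[of c] power_mult)
  finally show ?thesis using assms(2) by linarith
qed

lemma mis_beep_solves_MIS:
  fixes V :: "'v set"
  assumes "0 < c" "simple_graph V E" "inj_on ident V" "\<And>v. v \<in> V \<Longrightarrow> ident v \<le> card V ^ c"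
  shows "solves_MIS_in mis_beep mis_output (mis_rounds c (card V) (max_degree V E)) V E ident
           (card V) c (max_degree V E)"
proof -
  define n \<Delta> where "n = card V" and "\<Delta> = max_degree V E"
  have "finite V" using assms(2) unfolding simple_graph_def by blast
  interpret beeping_mis_run V E ident mis_beep n c \<Delta>
    "mis_id_bits c n" "2 * mis_code_length c n \<Delta>" "mis_code_length c n \<Delta>" "mis_code c n \<Delta>"
  proof
    show "ident v < 2 ^ mis_id_bits c n" if "v \<in> V" for v
      using less_two_power_mis_id_bits assms(1,4) that unfolding n_def by blast
    show "degree V E v \<le> \<Delta>" if "v \<in> V" for v
      using \<open>finite V\<close> that unfolding \<Delta>_def max_degree_def by simp
    have "\<Delta> * (mis_id_bits c n - 1) \<le> \<Delta> * mis_id_bits c n" by (rule mult_le_mono2) simp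
    then have "\<Delta> * (mis_id_bits c n - 1) < \<Delta> * mis_id_bits c n + mis_id_bits c n"
      using mis_id_bits_pos[OF assms(1), of n] by linarith
    then show "\<Delta> * (mis_id_bits c n - 1) < mis_code_length c n \<Delta>"
      unfolding mis_code_length_def by simp
  qed (use assms low_agreement_mis_code in \<open>simp_all add: mis_beep_def\<close>)
  show ?thesis
    using solves_MIS[of mis_output] unfolding mis_rounds_def n_def \<Delta>_def by (simp add: mis_output_def)
qed

lemma mis_rounds_le:
  assumes "0 < c" "1 \<le> \<Delta>"
  shows "mis_rounds c n \<Delta> \<le> 24 * \<Delta> ^ 2 * mis_id_bits c n ^ 3"
proof -
  let ?j = "mis_id_bits c n"
  have "mis_code_length c n \<Delta> \<le> 2 * \<Delta> * ?j"
    unfolding mis_code_length_def using assms(2) by (intro mult_le_mono1) simp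
  moreover have "phase_length ?j \<le> 3 * ?j"
    using mis_id_bits_pos[OF assms(1), of n] unfolding phase_length_def by simp
  ultimately have "mis_rounds c n \<Delta> \<le> (2 * \<Delta> * ?j) * (2 * (2 * \<Delta> * ?j)) * (3 * ?j)"
    unfolding mis_rounds_def by (intro mult_le_mono) simp_all
  also have "\<dots> = 24 * \<Delta> ^ 2 * ?j ^ 3"
    by (simp add: power2_eq_square power3_eq_cube)
  finally show ?thesis .
qed

lemma mis_id_bits_le_log:
  assumes "2 \<le> n"
  shows "real (mis_id_bits c n) \<le> 2 * real c * log 2 (real n)"
proof -
  have "1 \<le> log 2 (real n)" using assms by simp
  moreover have "real (floor_log n) \<le> log 2 (real n)"
    using floor_log_exp2_le assms by (intro le_log2_of_power) simp
  ultimately have "real (Suc (floor_log n)) \<le> 2 * log 2 (real n)" by simp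
  then have "real c * real (Suc (floor_log n)) \<le> real c * (2 * log 2 (real n))"
    by (rule mult_left_mono) simp
  then show ?thesis unfolding mis_id_bits_def by (simp add: algebra_simps)
qed

lemma mis_rounds_le_log:
  assumes "0 < c" "2 \<le> n" "1 \<le> \<Delta>"
  shows "real (mis_rounds c n \<Delta>) \<le> 192 * real c ^ 3 * real \<Delta> ^ 2 * log 2 (real n) ^ 3"
proof -
  have "real (mis_rounds c n \<Delta>) \<le> real (24 * \<Delta> ^ 2 * mis_id_bits c n ^ 3)"
    using mis_rounds_le[OF assms(1,3)] by (simp only: of_nat_le_iff)
  also have "\<dots> = 24 * real \<Delta> ^ 2 * real (mis_id_bits c n) ^ 3"
    by simp
  also have "\<dots> \<le> 24 * real \<Delta> ^ 2 * (2 * real c * log 2 (real n)) ^ 3"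
    using mis_id_bits_le_log[OF assms(2)] by (intro mult_left_mono power_mono) simp_all
  also have "\<dots> = 192 * real c ^ 3 * real \<Delta> ^ 2 * log 2 (real n) ^ 3"
    by (simp add: power_mult_distrib)
  finally show ?thesis .
qed

theorem corollary1:
  fixes c :: nat
  assumes "c \<ge> 1"
  shows "\<exists>(A :: beep_alg) (out :: nat \<Rightarrow> nat \<Rightarrow> nat \<Rightarrow> nat \<Rightarrow> bool list \<Rightarrow> bool)
            (T :: nat \<Rightarrow> nat \<Rightarrow> nat) (C :: real) (k :: nat).
     (\<forall>n \<Delta>. n \<ge> 2 \<longrightarrow> \<Delta> \<ge> 1 \<longrightarrow> real (T n \<Delta>) \<le> C * real \<Delta> ^ 2 * (log 2 (real n)) ^ k) \<and>
     (\<forall>(V :: 'v set) E ident.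
        simple_graph V E \<longrightarrow> V \<noteq> {} \<longrightarrow>
        inj_on ident V \<longrightarrow> ident ` V \<subseteq> {1 .. (card V) ^ c} \<longrightarrow>
        solves_MIS_in A out (T (card V) (max_degree V E)) V E ident
          (card V) c (max_degree V E))"
proof (intro exI conjI allI impI)
  have "0 < c" using assms by simp
  show "real (mis_rounds c n \<Delta>) \<le> (192 * real c ^ 3) * real \<Delta> ^ 2 * log 2 (real n) ^ 3"
    if "n \<ge> 2" "\<Delta> \<ge> 1" for n \<Delta>
    using mis_rounds_le_log[OF \<open>0 < c\<close> that] by simp
  show "solves_MIS_in mis_beep mis_output (mis_rounds c (card V) (max_degree V E)) V E ident
          (card V) c (max_degree V E)"
    if graph: "simple_graph V E" and inj: "inj_on ident V" and ids: "ident ` V \<subseteq> {1 .. card V ^ c}"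
    for V :: "'v set" and E ident
  proof -
    have "ident v \<le> card V ^ c" if "v \<in> V" for v using ids that by auto
    then show ?thesis using mis_beep_solves_MIS[OF \<open>0 < c\<close> graph inj] by blast
  qed
qed

end
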